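(* Let $X$ be a real Hilbert space, let $U,V$ be closed affine subspaces of $X$, let $T:=T_{U,V}$, $v:=P_{\overline{\operatorname{ran}}(\mathrm{Id}-T)}0$, and assume $v\in\operatorname{ran}(\mathrm{Id}-T)$. Then: (i) $T$ is affine and $T=\mathrm{Id}-P_U-P_V+2P_VP_U$; (ii) $v\in(\operatorname{par}U)^\perp\cap(\operatorname{par}V)^\perp$; (iii) for all $x\in X$, $\alpha\in\mathbb R$: $P_Ux=P_U(x+\alpha v)$; (iv) for all $x\in X$, $\alpha\in\mathbb R$: $P_Vx=P_V(x+\alpha v)$; (v) $T_{-v}=v+T=T_{(N_U,N_V(\cdot-v))}=T_{U,v+V}$; (vi) $Z_v=U\cap(v+V)$; (vii) $K_v=(\operatorname{par}U)^\perp\cap(\operatorname{par}V)^\perp$; (viii) $\operatorname{Fix}(T_{-v})=\operatorname{Fix}(v+T)=Z_v+K_v=(U\cap(v+V))+((\operatorname{par}U)^\perp\cap(\operatorname{par}V)^\perp)$.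
   Context: For nonempty closed convex $U,V$, $T_{U,V}:=\mathrm{Id}-P_U+P_V(2P_U-\mathrm{Id})$ is the Douglas–Rachford operator $T_{(N_U,N_V)}$, where for maximally monotone $A,B$, $T_{(A,B)}:=\mathrm{Id}-J_A+J_B(2J_A-\mathrm{Id})$ with $J_A=(\mathrm{Id}+A)^{-1}$. Here $v=P_{\overline{U-V}}0$. $\operatorname{par}U:=U-U$. $T_{-v}x:=T(x+v)$, $(v+T)x:=v+Tx$. For $C^\vee:=(-\mathrm{Id})\circ C\circ(-\mathrm{Id})$ and $C^{-\vee}:=(C^{-1})^\vee$, with $A=N_U$, $B=N_V$: $Z_v:=((-v+A)+B(\cdot-v))^{-1}(0)$ (normal solutions) and $K_v:=((-v+A)^{-1}+(B(\cdot-v))^{-\vee})^{-1}(0)$ (dual normal solutions). *)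

theory Defs
  imports "HOL-Analysis.Analysis"
begin

text \<open>Metric projection onto a set (in a real Hilbert space, onto a nonempty closed
convex set the nearest point exists and is unique).\<close>
definition proj :: "'a::real_inner set \<Rightarrow> 'a \<Rightarrow> 'a" where
  "proj S x = (SOME p. p \<in> S \<and> (\<forall>y\<in>S. dist x p \<le> dist x y))"

type_synonym 'a opr = "'a \<Rightarrow> 'a set"

definition normal_cone :: "'a::real_inner set \<Rightarrow> 'a opr" where
  "normal_cone C x = (if x \<in> C then {u. \<forall>c\<in>C. inner u (c - x) \<le> 0} else {})"

definition op_inv :: "'a opr \<Rightarrow> 'a opr" where
  "op_inv A y = {x. y \<in> A x}"

definition op_sum :: "'a::ab_group_add opr \<Rightarrow> 'a opr \<Rightarrow> 'a opr" where
  "op_sum A B x = {a + b | a b. a \<in> A x \<and> b \<in> B x}"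

definition op_trans :: "'a::ab_group_add \<Rightarrow> 'a opr \<Rightarrow> 'a opr" where
  "op_trans w A x = (\<lambda>a. w + a) ` A x"

definition op_shift :: "'a opr \<Rightarrow> 'a::ab_group_add \<Rightarrow> 'a opr" where
  "op_shift A w x = A (x - w)"

definition op_vee :: "'a::ab_group_add opr \<Rightarrow> 'a opr" where
  "op_vee C x = uminus ` C (- x)"

text \<open>Resolvent J_A = (Id + A)^{-1}, single-valued for maximally monotone A.\<close>
definition resolvent :: "'a::real_vector opr \<Rightarrow> 'a \<Rightarrow> 'a" where
  "resolvent A x = (THE y. x - y \<in> A y)"

definition DR_op :: "'a::real_vector opr \<Rightarrow> 'a opr \<Rightarrow> 'a \<Rightarrow> 'a" where
  "DR_op A B x = x - resolvent A x + resolvent B (2 *\<^sub>R resolvent A x - x)"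

definition DR :: "'a::real_inner set \<Rightarrow> 'a set \<Rightarrow> 'a \<Rightarrow> 'a" where
  "DR U V x = x - proj U x + proj V (2 *\<^sub>R proj U x - x)"

definition par :: "'a::ab_group_add set \<Rightarrow> 'a set" where
  "par U = {a - b | a b. a \<in> U \<and> b \<in> U}"

definition affine_map :: "('a::real_vector \<Rightarrow> 'b::real_vector) \<Rightarrow> bool" where
  "affine_map f \<longleftrightarrow> (\<forall>x y t. f ((1 - t) *\<^sub>R x + t *\<^sub>R y) = (1 - t) *\<^sub>R f x + t *\<^sub>R f y)"

definition Fix :: "('a \<Rightarrow> 'a) \<Rightarrow> 'a set" where
  "Fix f = {x. f x = x}"

definition Zsol :: "'a::ab_group_add opr \<Rightarrow> 'a opr \<Rightarrow> 'a \<Rightarrow> 'a set" where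
  "Zsol A B w = op_inv (op_sum (op_trans (- w) A) (op_shift B w)) 0"

definition Ksol :: "'a::ab_group_add opr \<Rightarrow> 'a opr \<Rightarrow> 'a \<Rightarrow> 'a set" where
  "Ksol A B w = op_inv (op_sum (op_inv (op_trans (- w) A)) (op_vee (op_inv (op_shift B w)))) 0"

end

theory Submission
  imports Defs
begin

text \<open>For closed affine \<open>U\<close>, \<open>V\<close> the projections \<open>P\<^sub>U\<close>, \<open>P\<^sub>V\<close> are affine, hence so are \<open>T\<close>
  and \<open>Id - T\<close>, and \<open>ran (Id - T)\<close> is an affine set. Its least-norm element \<open>v\<close>, being attained,
  is orthogonal to \<open>ran (Id - T) - v\<close>; evaluating this on the increments of \<open>P\<^sub>U\<close>, \<open>P\<^sub>V\<close>
  and \<open>P\<^sub>V P\<^sub>U\<close> along \<open>v\<close> forces \<open>v \<bottom> par U\<close> and \<open>v \<bottom> par V\<close>. Translations by such a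
  vector commute with \<open>P\<^sub>U\<close> and \<open>P\<^sub>V\<close>, and the normal cone of an affine set is, at each of its
  points, the orthogonal complement of its parallel space; the remaining identities follow from
  these two facts.\<close>

lemma orthogonal_comp_iff: "x \<in> orthogonal_comp W \<longleftrightarrow> (\<forall>l\<in>W. inner x l = 0)"
  by (auto simp: orthogonal_comp_def orthogonal_def inner_commute)

lemma par_memI: "a \<in> S \<Longrightarrow> b \<in> S \<Longrightarrow> a - b \<in> par S"
  by (auto simp: par_def)

lemma affine_reflect: "affine S \<Longrightarrow> p \<in> S \<Longrightarrow> c \<in> S \<Longrightarrow> 2 *\<^sub>R p - c \<in> S"
  using affine_def[THEN iffD1, rule_format, of S p c 2 "-1"] by simp

lemma nearest_point_exists:
  fixes S :: "'a::{real_inner,complete_space} set"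
  assumes "S \<noteq> {}" "closed S" "convex S"
  shows "\<exists>p\<in>S. \<forall>y\<in>S. dist x p \<le> dist x y"
proof -
  define f where "f y = (dist x y)^2" for y
  define d where "d = Inf (f ` S)"
  have bdd: "bdd_below (f ` S)" by (auto simp: f_def bdd_below_def intro!: exI[of _ 0])
  have d_le: "d \<le> f y" if "y \<in> S" for y using that bdd by (simp add: d_def cInf_lower)
  have "\<exists>y\<in>S. f y < d + inverse (real (Suc n))" for n
  proof -
    have "Inf (f ` S) < d + inverse (real (Suc n))" by (simp add: d_def)
    then show ?thesis using cInf_less_iff[of "f ` S"] assms(1) bdd by auto
  qed
  then obtain y where yS: "\<And>n. y n \<in> S" and yd: "\<And>n. f (y n) < d + inverse (real (Suc n))"
    by metis
  \<comment> \<open>parallelogram law, with the midpoint of \<open>y n\<close> and \<open>y m\<close> lying in \<open>S\<close>\<close>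
  have minimizing: "(norm (y n - y m))^2 \<le> 2 * inverse (real (Suc n)) + 2 * inverse (real (Suc m))"
    for n m
  proof -
    define a where "a = x - y n"
    define b where "b = x - y m"
    have parallelogram: "(norm (a - b))^2 + (norm (a + b))^2 = 2 * (norm a)^2 + 2 * (norm b)^2"
      by (simp add: power2_norm_eq_inner inner_simps inner_commute)
    have "a + b = 2 *\<^sub>R (x - ((1/2) *\<^sub>R y n + (1/2) *\<^sub>R y m))"
      by (simp add: a_def b_def algebra_simps scaleR_2)
    then have "(norm (a + b))^2 = 4 * f ((1/2) *\<^sub>R y n + (1/2) *\<^sub>R y m)"
      by (simp add: f_def dist_norm power_mult_distrib)
    moreover have "(1/2) *\<^sub>R y n + (1/2) *\<^sub>R y m \<in> S"
      using convexD[OF assms(3) yS yS] by simp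
    ultimately have "4 * d \<le> (norm (a + b))^2" using d_le by auto
    moreover have "(norm (a - b))^2 = (norm (y n - y m))^2"
      by (simp add: a_def b_def norm_minus_commute)
    moreover have "(norm a)^2 = f (y n)" "(norm b)^2 = f (y m)"
      by (simp_all add: a_def b_def f_def dist_norm)
    ultimately show ?thesis using parallelogram yd[of n] yd[of m] by linarith
  qed
  have "Cauchy y"
  proof (rule metric_CauchyI)
    fix e :: real assume "e > 0"
    then obtain N where N: "N > 0" "inverse (real N) < e^2/4"
      using ex_inverse_of_nat_less[of "e^2/4"] by auto
    have "dist (y m) (y n) < e" if "N \<le> m" "N \<le> n" for m n
    proof -
      have "inverse (real (Suc m)) \<le> inverse (real N)" "inverse (real (Suc n)) \<le> inverse (real N)"
        using that N by (auto intro!: le_imp_inverse_le)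
      then have "(dist (y m) (y n))^2 < e^2"
        using minimizing[of m n] N(2) by (simp add: dist_norm)
      then show ?thesis using \<open>e > 0\<close> by (simp add: power_less_imp_less_base)
    qed
    then show "\<exists>M. \<forall>m\<ge>M. \<forall>n\<ge>M. dist (y m) (y n) < e" by blast
  qed
  then obtain p where lim: "y \<longlonglongrightarrow> p" using Cauchy_convergent convergent_def by blast
  have pS: "p \<in> S" using closed_sequentially[OF assms(2)] yS lim by blast
  have "(\<lambda>n. f (y n)) \<longlonglongrightarrow> f p" unfolding f_def by (intro tendsto_intros lim)
  moreover have "(\<lambda>n. d + inverse (real (Suc n))) \<longlonglongrightarrow> d + 0"
    by (intro tendsto_intros LIMSEQ_inverse_real_of_nat)
  ultimately have "f p \<le> d" using yd by (intro LIMSEQ_le) (auto intro: less_imp_le)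
  have "dist x p \<le> dist x c" if "c \<in> S" for c
  proof -
    have "(dist x p)^2 \<le> (dist x c)^2" using \<open>f p \<le> d\<close> d_le[OF that] unfolding f_def by linarith
    then show ?thesis by (rule power2_le_imp_le) simp
  qed
  then show ?thesis using pS by blast
qed

lemma
  fixes S :: "'a::{real_inner,complete_space} set"
  assumes "S \<noteq> {}" "closed S" "convex S"
  shows proj_mem: "proj S x \<in> S"
    and proj_inner_le: "c \<in> S \<Longrightarrow> inner (x - proj S x) (c - proj S x) \<le> 0"
proof -
  define p where "p = proj S x"
  have p: "p \<in> S" "\<forall>y\<in>S. dist x p \<le> dist x y"
    using someI_ex[of "\<lambda>p. p \<in> S \<and> (\<forall>y\<in>S. dist x p \<le> dist x y)"]
      nearest_point_exists[OF assms, of x] by (auto simp: p_def proj_def)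
  have "inner (x - p) (c - p) \<le> 0" if c: "c \<in> S" for c
  proof (rule ccontr)
    define a where "a = inner (x - p) (c - p)"
    define b where "b = inner (c - p) (c - p)"
    assume "\<not> ?thesis"
    then have a: "a > 0" by (simp add: a_def)
    then have "c \<noteq> p" by (auto simp: a_def)
    then have b: "b > 0" by (simp add: b_def)
    \<comment> \<open>moving from \<open>p\<close> towards \<open>c\<close> by the step \<open>t\<close> would get closer to \<open>x\<close>\<close>
    define t where "t = min 1 (a / b)"
    have t: "0 < t" "t \<le> 1" "t \<le> a / b" using a b by (auto simp: t_def)
    then have tb: "t * b \<le> a" using b by (simp add: pos_le_divide_eq)
    have "p + t *\<^sub>R (c - p) \<in> S"
      using convexD[OF assms(3) p(1) c, of "1 - t" t] t by (simp add: algebra_simps)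
    then have "dist x p \<le> dist x (p + t *\<^sub>R (c - p))" using p by blast
    then have "(norm (x - p))^2 \<le> (norm ((x - p) - t *\<^sub>R (c - p)))^2"
      by (simp add: dist_norm algebra_simps power_mono)
    also have "\<dots> = (norm (x - p))^2 - 2 * t * a + t^2 * b"
      unfolding a_def b_def power2_norm_eq_inner
      by (simp add: inner_diff_left inner_diff_right inner_commute power2_eq_square algebra_simps)
    finally have "t * (2 * a) \<le> t * (t * b)" by (simp add: power2_eq_square algebra_simps)
    then show False using t tb a by (simp add: mult_le_cancel_left_pos)
  qed
  then show "proj S x \<in> S" "c \<in> S \<Longrightarrow> inner (x - proj S x) (c - proj S x) \<le> 0"
    using p by (simp_all add: p_def)
qed

lemma proj_eqI:
  fixes S :: "'a::{real_inner,complete_space} set"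
  assumes "S \<noteq> {}" "closed S" "convex S"
    and "y \<in> S" "\<And>c. c \<in> S \<Longrightarrow> inner (x - y) (c - y) \<le> 0"
  shows "proj S x = y"
proof -
  define p where "p = proj S x"
  have "inner (y - p) (y - p) = inner (x - p) (y - p) + inner (x - y) (p - y)"
    by (simp add: inner_simps inner_commute algebra_simps)
  also have "\<dots> \<le> 0"
    using proj_inner_le[OF assms(1-3) assms(4), of x] assms(5)[OF proj_mem[OF assms(1-3)], of x]
    by (simp add: p_def)
  finally have "inner (y - p) (y - p) = 0" using inner_ge_zero[of "y - p"] by linarith
  then show ?thesis by (simp add: p_def)
qed

lemma proj_affine_orthogonal:
  fixes S :: "'a::{real_inner,complete_space} set"
  assumes "S \<noteq> {}" "closed S" "affine S"
  shows "x - proj S x \<in> orthogonal_comp (par S)"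
proof -
  note cS = assms(1,2) affine_imp_convex[OF assms(3)]
  define p where "p = proj S x"
  have pS: "p \<in> S" using proj_mem[OF cS] by (simp add: p_def)
  \<comment> \<open>the variational inequality at \<open>c\<close> and at its reflection \<open>2p - c\<close> through \<open>p\<close>\<close>
  have zero: "inner (x - p) (c - p) = 0" if "c \<in> S" for c
  proof -
    have "inner (x - p) (c - p) \<le> 0" using proj_inner_le[OF cS that] by (simp add: p_def)
    moreover have "inner (x - p) ((2 *\<^sub>R p - c) - p) \<le> 0"
      using proj_inner_le[OF cS affine_reflect[OF assms(3) pS that]] by (simp add: p_def)
    moreover have "(2 *\<^sub>R p - c) - p = - (c - p)" by (simp add: algebra_simps scaleR_2)
    ultimately show ?thesis by (metis inner_minus_right neg_le_0_iff_le order_antisym)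
  qed
  have "inner (x - p) l = 0" if l: "l \<in> par S" for l
  proof -
    obtain a b where "a \<in> S" "b \<in> S" "l = a - b" using l by (auto simp: par_def)
    moreover have "a - b = (a - p) - (b - p)" by simp
    ultimately show ?thesis using zero by (simp only: inner_diff_right)
  qed
  then show ?thesis by (simp add: orthogonal_comp_iff p_def)
qed

lemma proj_affine_eqI:
  fixes S :: "'a::{real_inner,complete_space} set"
  assumes "S \<noteq> {}" "closed S" "affine S"
    and "y \<in> S" "x - y \<in> orthogonal_comp (par S)"
  shows "proj S x = y"
  using assms by (intro proj_eqI[OF assms(1,2) affine_imp_convex[OF assms(3)]])
    (auto simp: orthogonal_comp_iff par_memI)

lemma proj_affine_combination:
  fixes S :: "'a::{real_inner,complete_space} set"
  assumes "S \<noteq> {}" "closed S" "affine S"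
  shows "proj S ((1 - t) *\<^sub>R x + t *\<^sub>R y) = (1 - t) *\<^sub>R proj S x + t *\<^sub>R proj S y"
proof (rule proj_affine_eqI[OF assms])
  have "proj S x \<in> S" "proj S y \<in> S" using proj_mem[OF assms(1,2) affine_imp_convex[OF assms(3)]] by auto
  then show "(1 - t) *\<^sub>R proj S x + t *\<^sub>R proj S y \<in> S" using assms(3) by (simp add: affine_alt)
  have "(1 - t) *\<^sub>R x + t *\<^sub>R y - ((1 - t) *\<^sub>R proj S x + t *\<^sub>R proj S y)
          = (1 - t) *\<^sub>R (x - proj S x) + t *\<^sub>R (y - proj S y)"
    by (simp add: algebra_simps)
  also have "\<dots> \<in> orthogonal_comp (par S)"
    using proj_affine_orthogonal[OF assms]
    by (intro subspace_add subspace_scale subspace_orthogonal_comp) auto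
  finally show "(1 - t) *\<^sub>R x + t *\<^sub>R y - ((1 - t) *\<^sub>R proj S x + t *\<^sub>R proj S y) \<in> orthogonal_comp (par S)" .
qed

lemma proj_affine_add_orthogonal:
  fixes S :: "'a::{real_inner,complete_space} set"
  assumes "S \<noteq> {}" "closed S" "affine S" "w \<in> orthogonal_comp (par S)"
  shows "proj S (x + w) = proj S x"
proof (rule proj_affine_eqI[OF assms(1-3)])
  show "proj S x \<in> S" using proj_mem[OF assms(1,2) affine_imp_convex[OF assms(3)]] .
  have "x + w - proj S x = (x - proj S x) + w" by simp
  also have "\<dots> \<in> orthogonal_comp (par S)"
    by (rule subspace_add[OF subspace_orthogonal_comp proj_affine_orthogonal[OF assms(1-3)] assms(4)])
  finally show "x + w - proj S x \<in> orthogonal_comp (par S)" .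
qed

lemma mem_translation_iff: "z \<in> (\<lambda>y. w + y) ` S \<longleftrightarrow> z - w \<in> S"
  for w :: "'a::ab_group_add"
  by (auto intro: image_eqI[of _ _ "z - w"])

lemma proj_translation:
  fixes S :: "'a::{real_inner,complete_space} set"
  assumes "S \<noteq> {}" "closed S" "convex S"
  shows "proj ((\<lambda>y. w + y) ` S) z = w + proj S (z - w)"
proof (rule proj_eqI)
  show "(\<lambda>y. w + y) ` S \<noteq> {}" "closed ((\<lambda>y. w + y) ` S)" "convex ((\<lambda>y. w + y) ` S)"
    using assms closed_translation[of S w] convex_translation[of S w] by auto
  show "w + proj S (z - w) \<in> (\<lambda>y. w + y) ` S" using proj_mem[OF assms] by simp
  show "inner (z - (w + proj S (z - w))) (c - (w + proj S (z - w))) \<le> 0"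
    if "c \<in> (\<lambda>y. w + y) ` S" for c
  proof -
    have eqs: "z - (w + proj S (z - w)) = (z - w) - proj S (z - w)"
      "c - (w + proj S (z - w)) = (c - w) - proj S (z - w)" by simp_all
    show ?thesis unfolding eqs
      using proj_inner_le[OF assms, of "c - w" "z - w"] that by (simp add: mem_translation_iff)
  qed
qed

lemma normal_cone_affine_iff:
  assumes "affine S"
  shows "u \<in> normal_cone S a \<longleftrightarrow> a \<in> S \<and> u \<in> orthogonal_comp (par S)"
proof
  assume "u \<in> normal_cone S a"
  then have aS: "a \<in> S" and le: "\<And>c. c \<in> S \<Longrightarrow> inner u (c - a) \<le> 0"
    by (auto simp: normal_cone_def split: if_splits)
  have zero: "inner u (c - a) = 0" if "c \<in> S" for c
  proof -
    have "inner u ((2 *\<^sub>R a - c) - a) \<le> 0" using le[OF affine_reflect[OF assms aS that]] .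
    moreover have "(2 *\<^sub>R a - c) - a = - (c - a)" by (simp add: algebra_simps scaleR_2)
    ultimately show ?thesis using le[OF that] by (metis inner_minus_right neg_le_0_iff_le order_antisym)
  qed
  have "inner u l = 0" if l: "l \<in> par S" for l
  proof -
    obtain p q where "p \<in> S" "q \<in> S" "l = p - q" using l by (auto simp: par_def)
    moreover have "p - q = (p - a) - (q - a)" by simp
    ultimately show ?thesis using zero by (simp only: inner_diff_right)
  qed
  then show "a \<in> S \<and> u \<in> orthogonal_comp (par S)" using aS by (simp add: orthogonal_comp_iff)
next
  assume "a \<in> S \<and> u \<in> orthogonal_comp (par S)"
  then show "u \<in> normal_cone S a" by (auto simp: normal_cone_def orthogonal_comp_iff par_memI)
qed

lemma resolvent_normal_cone:
  fixes S :: "'a::{real_inner,complete_space} set"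
  assumes "S \<noteq> {}" "closed S" "convex S"
  shows "resolvent (normal_cone S) = proj S"
proof
  fix x
  show "resolvent (normal_cone S) x = proj S x"
    unfolding resolvent_def
  proof (rule the_equality)
    show "x - proj S x \<in> normal_cone S (proj S x)"
      using proj_mem[OF assms] proj_inner_le[OF assms] by (simp add: normal_cone_def)
    show "y = proj S x" if "x - y \<in> normal_cone S y" for y
      using that proj_eqI[OF assms, of y x] by (auto simp: normal_cone_def split: if_splits)
  qed
qed

lemma op_shift_normal_cone: "op_shift (normal_cone S) w = normal_cone ((\<lambda>y. w + y) ` S)"
proof
  fix y
  have "(\<forall>c\<in>S. inner u (c - (y - w)) \<le> 0) \<longleftrightarrow> (\<forall>c\<in>(\<lambda>y. w + y) ` S. inner u (c - y) \<le> 0)" for u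
    by (auto simp: algebra_simps)
  then show "op_shift (normal_cone S) w y = normal_cone ((\<lambda>y. w + y) ` S) y"
    by (simp add: op_shift_def normal_cone_def mem_translation_iff)
qed

lemma affine_range_affine_map:
  assumes "affine_map f"
  shows "affine (range f)"
  unfolding affine_alt
proof clarify
  fix x y and u :: real
  have "(1 - u) *\<^sub>R f x + u *\<^sub>R f y = f ((1 - u) *\<^sub>R x + u *\<^sub>R y)"
    using assms by (simp add: affine_map_def)
  then show "(1 - u) *\<^sub>R f x + u *\<^sub>R f y \<in> range f" by simp
qed

lemma affine_map_id_minus: "affine_map f \<Longrightarrow> affine_map (\<lambda>x. x - f x)"
  unfolding affine_map_def by (simp add: algebra_simps)

lemma par_translation: "par ((\<lambda>y. w + y) ` S) = par S"
proof -
  have "par ((\<lambda>y. w + y) ` S) = {(w + a) - (w + b) |a b. a \<in> S \<and> b \<in> S}"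
    unfolding par_def by blast
  then show ?thesis by (simp add: par_def)
qed

lemma proj_closure_orthogonal:
  fixes S :: "'a::{real_inner,complete_space} set"
  assumes "affine S" "v \<in> S" "v = proj (closure S) 0" "s \<in> S"
  shows "inner v (s - v) = 0"
proof -
  have cS: "closure S \<noteq> {}" "closed (closure S)" "convex (closure S)"
    using assms(2) convex_closure[OF affine_imp_convex[OF assms(1)]] by auto
  have le: "inner (- v) (c - v) \<le> 0" if "c \<in> S" for c
    using proj_inner_le[OF cS, of c 0] closure_subset that assms(3) by auto
  have reflected: "(2 *\<^sub>R v - s) - v = - (s - v)" by (simp add: algebra_simps scaleR_2)
  have "inner v (s - v) \<le> 0" using le[OF affine_reflect[OF assms(1,2,4)], unfolded reflected]
    by (simp add: inner_diff_right)
  moreover have "- inner v (s - v) \<le> 0" using le[OF assms(4)] by (simp add: inner_diff_right)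
  ultimately show ?thesis by linarith
qed

lemma DR_affine_eq:
  fixes U V :: "'a::{real_inner,complete_space} set"
  assumes "U \<noteq> {}" "closed U" "affine U" "V \<noteq> {}" "closed V" "affine V"
  shows "DR U V = (\<lambda>x. x - proj U x - proj V x + 2 *\<^sub>R proj V (proj U x))"
proof
  fix x
  have "proj V (2 *\<^sub>R proj U x - x) = 2 *\<^sub>R proj V (proj U x) - proj V x"
    using proj_affine_combination[OF assms(4-6), of "-1" "proj U x" x] by simp
  then show "DR U V x = x - proj U x - proj V x + 2 *\<^sub>R proj V (proj U x)"
    by (simp add: DR_def algebra_simps)
qed

lemma affine_map_DR:
  fixes U V :: "'a::{real_inner,complete_space} set"
  assumes "U \<noteq> {}" "closed U" "affine U" "V \<noteq> {}" "closed V" "affine V"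
  shows "affine_map (DR U V)"
  unfolding affine_map_def DR_affine_eq[OF assms]
  by (simp only: proj_affine_combination[OF assms(1-3)] proj_affine_combination[OF assms(4-6)])
    (simp add: algebra_simps)

lemma DR_displacement_orthogonal_inter:
  fixes U V :: "'a::{real_inner,complete_space} set"
  assumes "U \<noteq> {}" "closed U" "affine U" "V \<noteq> {}" "closed V" "affine V"
  shows "x - DR U V x \<in> orthogonal_comp (par U \<inter> par V)"
proof -
  define w where "w = 2 *\<^sub>R proj U x - x"
  have "x - DR U V x = (x - proj U x) + (w - proj V w)"
    by (simp add: DR_def w_def algebra_simps scaleR_2)
  moreover have "x - proj U x \<in> orthogonal_comp (par U \<inter> par V)"
    "w - proj V w \<in> orthogonal_comp (par U \<inter> par V)"
    using proj_affine_orthogonal[OF assms(1-3), of x] proj_affine_orthogonal[OF assms(4-6), of w]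
    by (auto simp: orthogonal_comp_iff)
  ultimately show ?thesis using subspace_add[OF subspace_orthogonal_comp] by metis
qed

text \<open>With \<open>a\<close>, \<open>c\<close>, \<open>e\<close> the increments of \<open>P\<^sub>U\<close>, \<open>P\<^sub>V\<close>, \<open>P\<^sub>V P\<^sub>U\<close> along \<open>v\<close>:
  \<open>|a - c|\<^sup>2 = \<langle>v, a + c - 2e\<rangle> = 0\<close>, so \<open>a = c\<close> lies in \<open>par U \<inter> par V\<close>, to which \<open>v\<close> is
  orthogonal; hence \<open>|a|\<^sup>2 = \<langle>v, a\<rangle> = 0\<close>.\<close>
lemma DR_displacement_orthogonal:
  fixes U V :: "'a::{real_inner,complete_space} set"
  assumes cU: "U \<noteq> {}" "closed U" "affine U" and cV: "V \<noteq> {}" "closed V" "affine V"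
    and v: "v = x0 - DR U V x0" and orth: "\<And>y. inner v ((y - DR U V y) - v) = 0"
  shows "v \<in> orthogonal_comp (par U) \<inter> orthogonal_comp (par V)"
proof -
  note orthU = subspace_diff[OF subspace_orthogonal_comp proj_affine_orthogonal[OF cU]
      proj_affine_orthogonal[OF cU]]
  note orthV = subspace_diff[OF subspace_orthogonal_comp proj_affine_orthogonal[OF cV]
      proj_affine_orthogonal[OF cV]]
  have PU: "proj U x \<in> U" and PV: "proj V x \<in> V" for x
    using proj_mem[OF cU(1,2) affine_imp_convex[OF cU(3)]] proj_mem[OF cV(1,2) affine_imp_convex[OF cV(3)]]
    by auto
  define a where "a = proj U (x0 + v) - proj U x0"
  define c where "c = proj V (x0 + v) - proj V x0"
  define e where "e = proj V (proj U (x0 + v)) - proj V (proj U x0)"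
  have a: "a \<in> par U" and c: "c \<in> par V" and e: "e \<in> par V"
    unfolding a_def c_def e_def using PU PV by (auto intro: par_memI)
  have "v - a = (x0 + v - proj U (x0 + v)) - (x0 - proj U x0)" by (simp add: a_def algebra_simps)
  then have va: "v - a \<in> orthogonal_comp (par U)" by (simp only: orthU)
  have "v - c = (x0 + v - proj V (x0 + v)) - (x0 - proj V x0)" by (simp add: c_def algebra_simps)
  then have vc: "v - c \<in> orthogonal_comp (par V)" by (simp only: orthV)
  have "a - e = (proj U (x0 + v) - proj V (proj U (x0 + v))) - (proj U x0 - proj V (proj U x0))"
    by (simp add: a_def e_def algebra_simps)
  then have ae: "a - e \<in> orthogonal_comp (par V)" by (simp only: orthV)
  have "(x0 + v - DR U V (x0 + v)) - v = a + c - 2 *\<^sub>R e"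
    by (simp add: v DR_affine_eq[OF cU cV] a_def c_def e_def algebra_simps)
  then have "inner v (a + c - 2 *\<^sub>R e) = 0" using orth[of "x0 + v"] by simp
  moreover have "inner v a = inner a a" "inner v c = inner c c" "inner v e = inner c e"
    "inner a c = inner e c"
    using va a vc c e ae by (auto simp: orthogonal_comp_iff inner_diff_left)
  ultimately have "inner (a - c) (a - c) = 0"
    by (simp add: inner_diff_left inner_diff_right inner_add_right inner_commute)
  then have "a = c" by simp
  then have "a \<in> par U \<inter> par V" using a c by simp
  then have "inner v a = 0"
    using DR_displacement_orthogonal_inter[OF cU cV, of x0] by (simp add: v orthogonal_comp_iff)
  then have "a = 0" using va a by (simp add: orthogonal_comp_iff inner_diff_left)
  then show ?thesis using va vc \<open>a = c\<close> by simp
qed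

lemma DR_add_orthogonal:
  fixes U V :: "'a::{real_inner,complete_space} set"
  assumes cU: "U \<noteq> {}" "closed U" "affine U" and cV: "V \<noteq> {}" "closed V" "affine V"
    and w: "w \<in> orthogonal_comp (par U) \<inter> orthogonal_comp (par V)"
  shows "DR U V (x + w) = w + DR U V x"
proof -
  have "- w \<in> orthogonal_comp (par V)" using w subspace_neg[OF subspace_orthogonal_comp] by blast
  then have "proj V (2 *\<^sub>R proj U x - (x + w)) = proj V (2 *\<^sub>R proj U x - x)"
    using proj_affine_add_orthogonal[OF cV, of "- w" "2 *\<^sub>R proj U x - x"] by (simp add: algebra_simps)
  moreover have "proj U (x + w) = proj U x" using proj_affine_add_orthogonal[OF cU] w by blast
  ultimately show ?thesis by (simp add: DR_def algebra_simps)
qed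

lemma DR_translation:
  fixes U V :: "'a::{real_inner,complete_space} set"
  assumes cV: "V \<noteq> {}" "closed V" "affine V" and w: "w \<in> orthogonal_comp (par V)"
  shows "DR U ((\<lambda>y. w + y) ` V) x = w + DR U V x"
proof -
  have "- w \<in> orthogonal_comp (par V)" using w subspace_neg[OF subspace_orthogonal_comp] by blast
  then have "proj ((\<lambda>y. w + y) ` V) z = w + proj V z" for z
    using proj_translation[OF cV(1,2) affine_imp_convex[OF cV(3)], of w z]
      proj_affine_add_orthogonal[OF cV, of "- w" z] by simp
  then show ?thesis by (simp add: DR_def algebra_simps)
qed

lemma DR_op_normal_cone_shift:
  fixes U V :: "'a::{real_inner,complete_space} set"
  assumes "U \<noteq> {}" "closed U" "convex U" "V \<noteq> {}" "closed V" "convex V"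
  shows "DR_op (normal_cone U) (op_shift (normal_cone V) w) = DR U ((\<lambda>y. w + y) ` V)"
proof -
  have "(\<lambda>y. w + y) ` V \<noteq> {}" "closed ((\<lambda>y. w + y) ` V)" "convex ((\<lambda>y. w + y) ` V)"
    using assms(4-6) closed_translation[of V w] convex_translation[of V w] by auto
  then show ?thesis
    by (simp add: fun_eq_iff DR_op_def DR_def op_shift_normal_cone resolvent_normal_cone assms(1-3))
qed

lemma Zsol_iff: "x \<in> Zsol A B w \<longleftrightarrow> (\<exists>a b. a \<in> A x \<and> b \<in> B (x - w) \<and> - w + a + b = 0)"
  by (auto simp: Zsol_def op_inv_def op_sum_def op_trans_def op_shift_def)

lemma Ksol_iff: "y \<in> Ksol A B w \<longleftrightarrow> (\<exists>p. y + w \<in> A p \<and> - y \<in> B (p - w))"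
  for w :: "'a::ab_group_add"
proof
  assume "y \<in> Ksol A B w"
  then obtain p b where p: "y \<in> (\<lambda>a. - w + a) ` A p" and b: "b \<in> uminus ` {x. - y \<in> B (x - w)}"
    and "0 = p + b"
    unfolding Ksol_def op_inv_def op_sum_def op_trans_def op_shift_def op_vee_def by blast
  from b obtain q where "b = - q" "- y \<in> B (q - w)" by blast
  moreover have "q = p" using \<open>0 = p + b\<close> \<open>b = - q\<close> by (simp add: eq_neg_iff_add_eq_0 add.commute)
  moreover have "y + w \<in> A p" using p by force
  ultimately show "\<exists>p. y + w \<in> A p \<and> - y \<in> B (p - w)" by blast
next
  assume "\<exists>p. y + w \<in> A p \<and> - y \<in> B (p - w)"
  then obtain p where "y + w \<in> A p" "- y \<in> B (p - w)" by blast
  then have "y \<in> (\<lambda>a. - w + a) ` A p" "- p \<in> uminus ` {x. - y \<in> B (x - w)}" "(0::'a) = p + - p"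
    using rev_image_eqI[of "y + w" "A p" y "\<lambda>a. - w + a"] by auto
  then show "y \<in> Ksol A B w"
    unfolding Ksol_def op_inv_def op_sum_def op_trans_def op_shift_def op_vee_def by blast
qed

lemma Zsol_normal_cone_affine:
  assumes "affine U" "affine V" "w \<in> orthogonal_comp (par V)"
  shows "Zsol (normal_cone U) (normal_cone V) w = U \<inter> ((\<lambda>y. w + y) ` V)"
proof (intro set_eqI iffI)
  fix x assume "x \<in> Zsol (normal_cone U) (normal_cone V) w"
  then show "x \<in> U \<inter> ((\<lambda>y. w + y) ` V)"
    by (auto simp: Zsol_iff normal_cone_affine_iff[OF assms(1)] normal_cone_affine_iff[OF assms(2)]
        mem_translation_iff)
next
  fix x assume "x \<in> U \<inter> ((\<lambda>y. w + y) ` V)"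
  then have "0 \<in> normal_cone U x" "w \<in> normal_cone V (x - w)"
    using assms subspace_0[OF subspace_orthogonal_comp]
    by (auto simp: normal_cone_affine_iff mem_translation_iff)
  then show "x \<in> Zsol (normal_cone U) (normal_cone V) w"
    unfolding Zsol_iff by (intro exI[of _ 0] exI[of _ w]) simp
qed

lemma Ksol_normal_cone_affine:
  assumes "affine U" "affine V" "w \<in> orthogonal_comp (par U) \<inter> orthogonal_comp (par V)"
    and "p \<in> U" "p - w \<in> V"
  shows "Ksol (normal_cone U) (normal_cone V) w = orthogonal_comp (par U) \<inter> orthogonal_comp (par V)"
proof (intro set_eqI iffI)
  fix y assume "y \<in> Ksol (normal_cone U) (normal_cone V) w"
  then have "y + w \<in> orthogonal_comp (par U)" "- y \<in> orthogonal_comp (par V)"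
    by (auto simp: Ksol_iff normal_cone_affine_iff[OF assms(1)] normal_cone_affine_iff[OF assms(2)])
  then have "(y + w) - w \<in> orthogonal_comp (par U)" "- (- y) \<in> orthogonal_comp (par V)"
    using assms(3) subspace_diff[OF subspace_orthogonal_comp] subspace_neg[OF subspace_orthogonal_comp]
    by blast+
  then show "y \<in> orthogonal_comp (par U) \<inter> orthogonal_comp (par V)" by simp
next
  fix y assume "y \<in> orthogonal_comp (par U) \<inter> orthogonal_comp (par V)"
  then have "y + w \<in> normal_cone U p" "- y \<in> normal_cone V (p - w)"
    using assms subspace_add[OF subspace_orthogonal_comp] subspace_neg[OF subspace_orthogonal_comp]
    by (auto simp: normal_cone_affine_iff)
  then show "y \<in> Ksol (normal_cone U) (normal_cone V) w" by (auto simp: Ksol_iff)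
qed

lemma Fix_DR_affine:
  fixes U V :: "'a::{real_inner,complete_space} set"
  assumes cU: "U \<noteq> {}" "closed U" "affine U" and cV: "V \<noteq> {}" "closed V" "affine V"
  shows "Fix (DR U V) = {z + k | z k. z \<in> U \<inter> V \<and> k \<in> orthogonal_comp (par U) \<inter> orthogonal_comp (par V)}"
proof (intro set_eqI iffI)
  fix x assume "x \<in> Fix (DR U V)"
  then have fixed: "proj V (2 *\<^sub>R proj U x - x) = proj U x" by (simp add: Fix_def DR_def algebra_simps)
  define z where "z = proj U x"
  have "z \<in> U" using proj_mem[OF cU(1,2) affine_imp_convex[OF cU(3)]] by (simp add: z_def)
  moreover have "z \<in> V" using proj_mem[OF cV(1,2) affine_imp_convex[OF cV(3)]] fixed by (metis z_def)
  moreover have "x - z \<in> orthogonal_comp (par U)" using proj_affine_orthogonal[OF cU] by (simp add: z_def)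
  moreover have "- (x - z) \<in> orthogonal_comp (par V)"
    using proj_affine_orthogonal[OF cV, of "2 *\<^sub>R z - x"] fixed by (simp add: z_def algebra_simps scaleR_2)
  then have "x - z \<in> orthogonal_comp (par V)" using subspace_neg[OF subspace_orthogonal_comp] by force
  moreover have "x = z + (x - z)" by simp
  ultimately show "x \<in> {z + k | z k. z \<in> U \<inter> V \<and> k \<in> orthogonal_comp (par U) \<inter> orthogonal_comp (par V)}"
    by blast
next
  fix x assume "x \<in> {z + k | z k. z \<in> U \<inter> V \<and> k \<in> orthogonal_comp (par U) \<inter> orthogonal_comp (par V)}"
  then obtain z k where x: "x = z + k" and z: "z \<in> U" "z \<in> V"
    and k: "k \<in> orthogonal_comp (par U)" "k \<in> orthogonal_comp (par V)" by blast
  have "proj U x = z" using proj_affine_eqI[OF cU z(1)] k x by simp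
  moreover have "proj V (z - k) = z"
    using proj_affine_eqI[OF cV z(2)] subspace_neg[OF subspace_orthogonal_comp k(2)] by simp
  ultimately show "x \<in> Fix (DR U V)" by (simp add: Fix_def DR_def x scaleR_2)
qed

lemma Fix_translated_DR_affine:
  fixes U V :: "'a::{real_inner,complete_space} set"
  assumes cU: "U \<noteq> {}" "closed U" "affine U" and cV: "V \<noteq> {}" "closed V" "affine V"
    and w: "w \<in> orthogonal_comp (par V)"
  shows "Fix (\<lambda>x. w + DR U V x) = {z + k | z k. z \<in> U \<inter> ((\<lambda>y. w + y) ` V) \<and>
      k \<in> orthogonal_comp (par U) \<inter> orthogonal_comp (par V)}"
proof -
  have "(\<lambda>y. w + y) ` V \<noteq> {}" "closed ((\<lambda>y. w + y) ` V)" "affine ((\<lambda>y. w + y) ` V)"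
    using cV closed_translation[of V w] affine_translation[of V w] by auto
  moreover have "(\<lambda>x. w + DR U V x) = DR U ((\<lambda>y. w + y) ` V)" using DR_translation[OF cV w] by auto
  ultimately show ?thesis using Fix_DR_affine[OF cU] par_translation[of w V] by simp
qed

theorem proposition4p3:
  fixes U V :: "'a::{real_inner, complete_space} set"
    and v :: 'a
  assumes "U \<noteq> {}" "closed U" "affine U"
    and "V \<noteq> {}" "closed V" "affine V"
    and v_def: "v = proj (closure (range (\<lambda>x. x - DR U V x))) 0"
    and v_ran: "v \<in> range (\<lambda>x. x - DR U V x)"
  shows "affine_map (DR U V) \<and>
           DR U V = (\<lambda>x. x - proj U x - proj V x + 2 *\<^sub>R proj V (proj U x)) \<and>
         v \<in> orthogonal_comp (par U) \<inter> orthogonal_comp (par V) \<and>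
         (\<forall>x (\<alpha>::real). proj U x = proj U (x + \<alpha> *\<^sub>R v)) \<and>
         (\<forall>x (\<alpha>::real). proj V x = proj V (x + \<alpha> *\<^sub>R v)) \<and>
         (\<lambda>x. DR U V (x + v)) = (\<lambda>x. v + DR U V x) \<and>
         (\<lambda>x. v + DR U V x) = DR_op (normal_cone U) (op_shift (normal_cone V) v) \<and>
         DR_op (normal_cone U) (op_shift (normal_cone V) v) = DR U ((\<lambda>y. v + y) ` V) \<and>
         Zsol (normal_cone U) (normal_cone V) v = U \<inter> ((\<lambda>y. v + y) ` V) \<and>
         Ksol (normal_cone U) (normal_cone V) v = orthogonal_comp (par U) \<inter> orthogonal_comp (par V) \<and>
         Fix (\<lambda>x. DR U V (x + v)) = Fix (\<lambda>x. v + DR U V x) \<and>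
         Fix (\<lambda>x. v + DR U V x) =
           {z + k | z k. z \<in> Zsol (normal_cone U) (normal_cone V) v \<and>
                         k \<in> Ksol (normal_cone U) (normal_cone V) v} \<and>
         {z + k | z k. z \<in> Zsol (normal_cone U) (normal_cone V) v \<and>
                       k \<in> Ksol (normal_cone U) (normal_cone V) v} =
           {z + k | z k. z \<in> U \<inter> ((\<lambda>y. v + y) ` V) \<and>
                         k \<in> orthogonal_comp (par U) \<inter> orthogonal_comp (par V)}"
proof -
  note cU = assms(1-3) and cV = assms(4-6)
  obtain x0 where x0: "v = x0 - DR U V x0" using v_ran by blast
  have "inner v ((y - DR U V y) - v) = 0" for y
    using proj_closure_orthogonal[OF affine_range_affine_map[OF affine_map_id_minus[OF affine_map_DR[OF cU cV]]]
        v_ran v_def] by blast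
  then have v: "v \<in> orthogonal_comp (par U) \<inter> orthogonal_comp (par V)"
    using DR_displacement_orthogonal[OF cU cV x0] by blast
  have "\<alpha> *\<^sub>R v \<in> orthogonal_comp (par U)" "\<alpha> *\<^sub>R v \<in> orthogonal_comp (par V)" for \<alpha> :: real
    using v subspace_scale[OF subspace_orthogonal_comp] by blast+
  then have proj_shift: "\<forall>x (\<alpha>::real). proj U x = proj U (x + \<alpha> *\<^sub>R v)"
      "\<forall>x (\<alpha>::real). proj V x = proj V (x + \<alpha> *\<^sub>R v)"
    using proj_affine_add_orthogonal[OF cU] proj_affine_add_orthogonal[OF cV] by metis+
  have shift: "(\<lambda>x. DR U V (x + v)) = (\<lambda>x. v + DR U V x)"
    using DR_add_orthogonal[OF cU cV v] by simp
  have translate: "(\<lambda>x. v + DR U V x) = DR U ((\<lambda>y. v + y) ` V)"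
    using DR_translation[OF cV] v by auto
  have DR_op: "DR_op (normal_cone U) (op_shift (normal_cone V) v) = DR U ((\<lambda>y. v + y) ` V)"
    using DR_op_normal_cone_shift[OF cU(1,2) affine_imp_convex[OF cU(3)] cV(1,2) affine_imp_convex[OF cV(3)]] .
  have Z: "Zsol (normal_cone U) (normal_cone V) v = U \<inter> ((\<lambda>y. v + y) ` V)"
    using Zsol_normal_cone_affine[OF cU(3) cV(3)] v by blast
  have "proj U x0 \<in> U" "proj U x0 - v \<in> V"
    using proj_mem[OF cU(1,2) affine_imp_convex[OF cU(3)]] proj_mem[OF cV(1,2) affine_imp_convex[OF cV(3)]]
    by (auto simp: x0 DR_def)
  then have K: "Ksol (normal_cone U) (normal_cone V) v = orthogonal_comp (par U) \<inter> orthogonal_comp (par V)"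
    using Ksol_normal_cone_affine[OF cU(3) cV(3) v] by blast
  show ?thesis
    unfolding Z K shift DR_op
    using affine_map_DR[OF cU cV] DR_affine_eq[OF cU cV] v proj_shift translate
      Fix_translated_DR_affine[OF cU cV] by blast
qed

end
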